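(* Let $G$ be a graph with $N$ vertices, let $Q^\dagger$ be an operator with $[\sum_i s_i^\dagger s_i,Q^\dagger]=cQ^\dagger$ for a constant $c$, let $L$ be the largest integer with $|Q^L\rangle\neq0$, and let $\alpha,\beta,\gamma$ be functions from the positive integers to the positive reals such that $Q^\dagger$ satisfies properties (P.1) with $\alpha$, (P.2) with $\beta$, and (P.3) with $\gamma$. Let $H$ be a $k$-local operator of range at most $R$ (with $k,R\ge1$) such that $H|Q^p\rangle=E_p|Q^p\rangle$ for all $p\in\{0,\dots,L\}$, and suppose $N>\beta(\alpha(R))\,\gamma(k)$. Then $E_p=\Omega+\omega p$ for all $p\in\{0,\dots,L\}$, where $\Omega=\Omega'$ and $\omega=c\,\omega'$ with $\Omega',\omega'$ the constants provided by (P.1) for $H$.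
   Context: System of $N$ qubits on the vertices of a graph $G$ with local basis $|0\rangle,|1\rangle$. For each vertex $i$, $s_i^\dagger$ acts on $i$ as $s^\dagger|0\rangle=|1\rangle$, $s^\dagger|1\rangle=0$, $s_i=(s_i^\dagger)^\dagger$; $|\overline 0\rangle=|0\rangle^{\otimes N}$. Distances are graph distances; for a vertex set $X$, $\mathrm{diam}(X)=1+\max_{i,j\in X}(\text{distance})$; an operator is supported in $X$ if it acts as identity outside $X$. Every operator has a unique expansion in normal-ordered strings $s^\dagger_{j_1}\cdots s^\dagger_{j_n}s_{k_1}\cdots s_{k_m}$ (the $j$'s pairwise distinct, the $k$'s pairwise distinct); a string has range $R$ where $R$ is the smallest positive integer with all pairwise distances between its sites $<R$; an operator has range at most $R$ if all its strings with nonzero coefficient do, and is $k$-local if each such string involves at most $k$ sites. Operators need not be Hermitian. Tower: $|Q^p\rangle=(Q^\dagger)^p|\overline 0\rangle$ (unnormalized), so $|Q^0\rangle=|\overline 0\rangle$, $|Q\rangle=|Q^1\rangle$. Properties: (P.1) with $\alpha$: for every positive integer $R$ and every operator $H$ of range at most $R$ with $H|Q^0\rangle\propto|Q^0\rangle$ and $H|Q^1\rangle\propto|Q^1\rangle$, there exist constants $\Omega',\omega'$ and operators $h_X$, indexed by vertex sets $X$ with $\mathrm{diam}(X)\le\alpha(R)$, each supported in $X$ with $h_X|Q\rangle=h_X|\overline 0\rangle=0$, such that $H=\Omega' I+\omega'\sum_i s_i^\dagger s_i+\sum_{X:\mathrm{diam}(X)\le\alpha(R)}h_X$. (P.2) with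 $\beta$: for every positive integer $R_{\max}$ and every family of operators $h_X$ (indexed by vertex sets $X$ with $\mathrm{diam}(X)\le R_{\max}$, each supported in $X$, with $h_X|Q\rangle=h_X|\overline 0\rangle=0$), if $\left(\sum_X h_X\right)|Q^p\rangle=E'_p|Q^p\rangle$ for some $p\le\min(L,N/\beta(R_{\max}))$, then $E'_p=0$. (P.3) with $\gamma$: for every $k\ge1$ and every $k$-local operator $H$, if $H|Q^q\rangle=0$ for all $q\le\min(\gamma(k),L)$, then $H|Q^p\rangle=0$ for all $p\in\{0,\dots,L\}$. *)

theory Defs
  imports Complex_Main "HOL-Library.Extended_Nat"
begin

text \<open>The vertex set is the finite type 'v
  (so N = CARD('v)); the graph is given by an adjacency relation G.
  A computational basis state is identified with the set of vertices in state 1.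
  Operators are matrices indexed by basis states: A S T is the matrix element (S, T).\<close>

type_synonym 'v op = "'v set \<Rightarrow> 'v set \<Rightarrow> complex"
type_synonym 'v vec = "'v set \<Rightarrow> complex"

definition op_apply :: "'v::finite op \<Rightarrow> 'v vec \<Rightarrow> 'v vec" where
  "op_apply A \<psi> = (\<lambda>S. \<Sum>T\<in>UNIV. A S T * \<psi> T)"

definition op_mult :: "'v::finite op \<Rightarrow> 'v op \<Rightarrow> 'v op" where
  "op_mult A B = (\<lambda>S U. \<Sum>T\<in>UNIV. A S T * B T U)"

definition idop :: "'v op" where
  "idop = (\<lambda>S T. if S = T then 1 else 0)"

definition sdag :: "'v \<Rightarrow> 'v op" where
  "sdag i = (\<lambda>S T. if i \<notin> T \<and> S = insert i T then 1 else 0)"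

definition sann :: "'v \<Rightarrow> 'v op" where
  "sann i = (\<lambda>S T. if i \<in> T \<and> S = T - {i} then 1 else 0)"

definition numop :: "'v::finite op" where
  "numop = (\<lambda>S T. \<Sum>i\<in>UNIV. op_mult (sdag i) (sann i) S T)"

text \<open>Normal-ordered string s^dagger_{j in J} s_{k in K} (factors on distinct sites commute,
  so the string depends only on the sets J and K); written out as a matrix.\<close>
definition nstring :: "'v set \<Rightarrow> 'v set \<Rightarrow> 'v op" where
  "nstring J K = (\<lambda>S T. if K \<subseteq> T \<and> J \<inter> (T - K) = {} \<and> S = J \<union> (T - K) then 1 else 0)"

text \<open>Acts as identity outside X.\<close>
definition supported_in :: "'v set \<Rightarrow> 'v op \<Rightarrow> bool" where
  "supported_in X A \<longleftrightarrow>
     (\<forall>S T. S - X \<noteq> T - X \<longrightarrow> A S T = 0) \<and>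
     (\<forall>S T S' T'. S \<inter> X = S' \<inter> X \<and> T \<inter> X = T' \<inter> X \<and> S - X = T - X \<and> S' - X = T' - X
        \<longrightarrow> A S T = A S' T')"

text \<open>Graph distance (infinite if not connected).\<close>
definition gdist :: "('v \<Rightarrow> 'v \<Rightarrow> bool) \<Rightarrow> 'v \<Rightarrow> 'v \<Rightarrow> enat" where
  "gdist G i j = (INF n\<in>{n. (G ^^ n) i j}. enat n)"

definition diam :: "('v \<Rightarrow> 'v \<Rightarrow> bool) \<Rightarrow> 'v set \<Rightarrow> enat" where
  "diam G X = 1 + (SUP i\<in>X. SUP j\<in>X. gdist G i j)"

definition diam_le :: "('v \<Rightarrow> 'v \<Rightarrow> bool) \<Rightarrow> 'v set \<Rightarrow> real \<Rightarrow> bool" where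
  "diam_le G X r \<longleftrightarrow> (\<exists>n. diam G X = enat n \<and> real n \<le> r)"

text \<open>Range at most R / k-locality, via the (unique) normal-ordered expansion.\<close>
definition range_le :: "('v::finite \<Rightarrow> 'v \<Rightarrow> bool) \<Rightarrow> nat \<Rightarrow> 'v op \<Rightarrow> bool" where
  "range_le G R A \<longleftrightarrow> (\<exists>coef :: 'v set \<times> 'v set \<Rightarrow> complex.
      A = (\<lambda>S T. \<Sum>JK\<in>UNIV. coef JK * nstring (fst JK) (snd JK) S T) \<and>
      (\<forall>J K. coef (J, K) \<noteq> 0 \<longrightarrow> (\<forall>i\<in>J \<union> K. \<forall>j\<in>J \<union> K. gdist G i j < enat R)))"

definition k_local :: "nat \<Rightarrow> 'v::finite op \<Rightarrow> bool" where
  "k_local k A \<longleftrightarrow> (\<exists>coef :: 'v set \<times> 'v set \<Rightarrow> complex.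
      A = (\<lambda>S T. \<Sum>JK\<in>UNIV. coef JK * nstring (fst JK) (snd JK) S T) \<and>
      (\<forall>J K. coef (J, K) \<noteq> 0 \<longrightarrow> card (J \<union> K) \<le> k))"

definition vac :: "'v vec" where
  "vac = (\<lambda>S. if S = {} then 1 else 0)"

text \<open>|Q^p> = (Q^dagger)^p |0...0>, Qd being the operator Q^dagger.\<close>
definition qvec :: "'v::finite op \<Rightarrow> nat \<Rightarrow> 'v vec" where
  "qvec Qd p = (op_apply Qd ^^ p) vac"

definition proportional :: "'v::finite op \<Rightarrow> 'v vec \<Rightarrow> bool" where
  "proportional H v \<longleftrightarrow> (\<exists>a::complex. op_apply H v = (\<lambda>S. a * v S))"

definition P1_decomp :: "('v::finite \<Rightarrow> 'v \<Rightarrow> bool) \<Rightarrow> 'v op \<Rightarrow> (nat \<Rightarrow> real) \<Rightarrow> nat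
    \<Rightarrow> 'v op \<Rightarrow> complex \<Rightarrow> complex \<Rightarrow> ('v set \<Rightarrow> 'v op) \<Rightarrow> bool" where
  "P1_decomp G Qd \<alpha> R H \<Omega> \<omega> h \<longleftrightarrow>
     (\<forall>X. diam_le G X (\<alpha> R) \<longrightarrow> supported_in X (h X) \<and>
          op_apply (h X) (qvec Qd 1) = (\<lambda>_. 0) \<and> op_apply (h X) vac = (\<lambda>_. 0)) \<and>
     H = (\<lambda>S T. \<Omega> * idop S T + \<omega> * numop S T + (\<Sum>X\<in>{X. diam_le G X (\<alpha> R)}. h X S T))"

definition prop_P1 :: "('v::finite \<Rightarrow> 'v \<Rightarrow> bool) \<Rightarrow> 'v op \<Rightarrow> (nat \<Rightarrow> real) \<Rightarrow> bool" where
  "prop_P1 G Qd \<alpha> \<longleftrightarrow> (\<forall>R::nat. R > 0 \<longrightarrow> (\<forall>H. range_le G R H \<and> proportional H (qvec Qd 0)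
      \<and> proportional H (qvec Qd 1) \<longrightarrow> (\<exists>\<Omega> \<omega> h. P1_decomp G Qd \<alpha> R H \<Omega> \<omega> h)))"

definition prop_P2 :: "('v::finite \<Rightarrow> 'v \<Rightarrow> bool) \<Rightarrow> 'v op \<Rightarrow> nat \<Rightarrow> (nat \<Rightarrow> real) \<Rightarrow> bool" where
  "prop_P2 G Qd L \<beta> \<longleftrightarrow> (\<forall>Rmax::nat. Rmax > 0 \<longrightarrow> (\<forall>h :: 'v set \<Rightarrow> 'v op.
      (\<forall>X. diam G X \<le> enat Rmax \<longrightarrow> supported_in X (h X) \<and>
          op_apply (h X) (qvec Qd 1) = (\<lambda>_. 0) \<and> op_apply (h X) vac = (\<lambda>_. 0)) \<longrightarrow>
      (\<forall>p E'. op_apply (\<lambda>S T. \<Sum>X\<in>{X. diam G X \<le> enat Rmax}. h X S T) (qvec Qd p)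
                 = (\<lambda>S. E' * qvec Qd p S)
              \<and> real p \<le> min (real L) (real (card (UNIV :: 'v set)) / \<beta> Rmax) \<longrightarrow> E' = 0)))"

definition prop_P3 :: "'v::finite op \<Rightarrow> nat \<Rightarrow> (nat \<Rightarrow> real) \<Rightarrow> bool" where
  "prop_P3 Qd L \<gamma> \<longleftrightarrow> (\<forall>k::nat. k \<ge> 1 \<longrightarrow> (\<forall>H. k_local k H \<and>
      (\<forall>q::nat. real q \<le> min (\<gamma> k) (real L) \<longrightarrow> op_apply H (qvec Qd q) = (\<lambda>_. 0)) \<longrightarrow>
      (\<forall>p\<le>L. op_apply H (qvec Qd p) = (\<lambda>_. 0))))"

end

theory Submission imports Defs begin

text \<open>Subtracting the (P.1) constants from H leaves the sum of local terms, a k-local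
  operator whose eigenvalue on each tower state is E p - \<Omega> - c \<omega> p, since the number
  operator has eigenvalue c p on the p-th tower state.  By (P.2) this eigenvalue vanishes for
  p \<le> N / \<beta>(\<alpha> R), in particular for all p \<le> \<gamma> k, so the local sum annihilates these states;
  (P.3) propagates this to the whole tower, and the nonvanishing of the tower states gives
  E p = \<Omega> + c \<omega> p.  (P.1) itself applies because |Q^0> and |Q^1> are eigenvectors of H.\<close>

lemma op_apply_op_mult: "op_apply (op_mult A B) v = op_apply A (op_apply B v)"
  unfolding op_apply_def op_mult_def
  by (auto simp: sum_distrib_left sum_distrib_right mult.assoc intro!: ext sum.swap[THEN trans])

lemma op_apply_zero_vec [simp]: "op_apply A (\<lambda>_. 0) = (\<lambda>_. 0)"
  unfolding op_apply_def by simp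

lemma op_apply_zero_op [simp]: "op_apply (\<lambda>_ _. 0) v = (\<lambda>_. 0)"
  unfolding op_apply_def by simp

lemma op_apply_scale_vec: "op_apply A (\<lambda>S. a * v S) = (\<lambda>S. a * op_apply A v S)"
  unfolding op_apply_def by (simp add: sum_distrib_left algebra_simps)

lemma op_apply_add_op: "op_apply (\<lambda>S T. A S T + B S T) v = (\<lambda>S. op_apply A v S + op_apply B v S)"
  unfolding op_apply_def by (simp add: sum.distrib algebra_simps)

lemma op_apply_diff_op: "op_apply (\<lambda>S T. A S T - B S T) v = (\<lambda>S. op_apply A v S - op_apply B v S)"
  unfolding op_apply_def by (simp add: sum_subtractf algebra_simps)

lemma op_apply_scale_op: "op_apply (\<lambda>S T. a * A S T) v = (\<lambda>S. a * op_apply A v S)"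
  unfolding op_apply_def by (simp add: sum_distrib_left algebra_simps)

lemma op_apply_idop [simp]: "op_apply idop v = v"
  unfolding op_apply_def idop_def by (simp add: if_distrib[of "\<lambda>x. x * _"] cong: if_cong)

lemma op_mult_sdag_sann: "op_mult (sdag i) (sann i) S T = (if i \<in> T \<and> S = T then 1 else 0)"
proof -
  have "op_mult (sdag i) (sann i) S T
      = (\<Sum>U\<in>UNIV. if U = T - {i} then (if i \<in> T \<and> S = T then 1 else 0) else 0)"
    unfolding op_mult_def sdag_def sann_def by (rule sum.cong) (auto simp: insert_absorb)
  then show ?thesis by simp
qed

lemma numop_eq: "numop S T = (if S = T then of_nat (card T) else 0)"
  unfolding numop_def op_mult_sdag_sann by (auto simp: sum.If_cases)

lemma op_apply_numop: "op_apply numop v = (\<lambda>S. of_nat (card S) * v S)"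
  unfolding op_apply_def numop_eq by (simp add: if_distrib[of "\<lambda>x. x * _"] cong: if_cong)

lemma k_local_mono:
  assumes "k_local k A" and "k \<le> k'"
  shows "k_local k' A"
proof -
  obtain coef where "A = (\<lambda>S T. \<Sum>JK\<in>UNIV. coef JK * nstring (fst JK) (snd JK) S T)"
    and "\<forall>J K. coef (J, K) \<noteq> 0 \<longrightarrow> card (J \<union> K) \<le> k"
    using assms(1) unfolding k_local_def by blast
  moreover from this(2) have "\<forall>J K. coef (J, K) \<noteq> 0 \<longrightarrow> card (J \<union> K) \<le> k'"
    using assms(2) by (meson order_trans)
  ultimately show ?thesis
    unfolding k_local_def by (intro exI[of _ coef] conjI)
qed

lemma k_local_diff_scaled:
  assumes "k_local k A" and "k_local k B"
  shows "k_local k (\<lambda>S T. A S T - b * B S T)"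
proof -
  obtain cA where A: "A = (\<lambda>S T. \<Sum>JK\<in>UNIV. cA JK * nstring (fst JK) (snd JK) S T)"
    and cA: "\<forall>J K. cA (J, K) \<noteq> 0 \<longrightarrow> card (J \<union> K) \<le> k"
    using assms(1) unfolding k_local_def by blast
  obtain cB where B: "B = (\<lambda>S T. \<Sum>JK\<in>UNIV. cB JK * nstring (fst JK) (snd JK) S T)"
    and cB: "\<forall>J K. cB (J, K) \<noteq> 0 \<longrightarrow> card (J \<union> K) \<le> k"
    using assms(2) unfolding k_local_def by blast
  have "(\<lambda>S T. A S T - b * B S T)
      = (\<lambda>S T. \<Sum>JK\<in>UNIV. (cA JK - b * cB JK) * nstring (fst JK) (snd JK) S T)"
    unfolding A B by (simp add: left_diff_distrib sum_subtractf sum_distrib_left mult.assoc)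
  moreover have "\<forall>J K. cA (J, K) - b * cB (J, K) \<noteq> 0 \<longrightarrow> card (J \<union> K) \<le> k"
    using cA cB by force
  ultimately show ?thesis
    unfolding k_local_def by (intro exI[of _ "\<lambda>JK. cA JK - b * cB JK"] conjI)
qed

lemma k_local_idop: "k_local 0 idop"
proof -
  have "(idop :: 'v::finite op)
      = (\<lambda>S T. \<Sum>JK\<in>UNIV. (if JK = ({}, {}) then 1 else 0) * nstring (fst JK) (snd JK) S T)"
    by (simp add: if_distrib[of "\<lambda>x. x * _"] sum.delta' nstring_def idop_def cong: if_cong)
  moreover have
    "\<forall>J K. (if (J, K) = ({}, {}) then 1 else 0 :: complex) \<noteq> 0 \<longrightarrow> card (J \<union> K) \<le> 0"
    by simp
  ultimately show ?thesis
    unfolding k_local_def by (intro exI[of _ "\<lambda>JK. if JK = ({}, {}) then 1 else 0"] conjI)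
qed

lemma k_local_numop: "k_local 1 (numop :: 'v::finite op)"
proof -
  let ?D = "range (\<lambda>i::'v. ({i}, {i}))"
  have "(\<Sum>JK\<in>UNIV. (if JK \<in> ?D then 1 else 0) * nstring (fst JK) (snd JK) S T)
      = (\<Sum>i\<in>UNIV. nstring {i} {i} S T)" for S T :: "'v set"
    by (simp add: if_distrib[of "\<lambda>x. x * _"] sum.If_cases Int_absorb1 sum.reindex inj_on_def
        cong: if_cong)
  moreover have "nstring {i} {i} S T = op_mult (sdag i) (sann i) S T" for i and S T :: "'v set"
    unfolding op_mult_sdag_sann nstring_def by auto
  ultimately have numop:
    "numop = (\<lambda>S T. \<Sum>JK\<in>UNIV. (if JK \<in> ?D then 1 else 0) * nstring (fst JK) (snd JK) S T)"
    unfolding numop_def by simp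
  have "\<forall>J K. (if (J, K) \<in> ?D then 1 else 0 :: complex) \<noteq> 0 \<longrightarrow> card (J \<union> K) \<le> 1"
    by auto
  with numop show ?thesis
    unfolding k_local_def by (intro exI[of _ "\<lambda>JK. if JK \<in> ?D then 1 else 0"] conjI)
qed

lemma qvec_Suc: "qvec Qd (Suc p) = op_apply Qd (qvec Qd p)"
  unfolding qvec_def by simp

lemma qvec_nonzero:
  assumes "qvec Qd L \<noteq> (\<lambda>_. 0)" and "p \<le> L"
  shows "qvec Qd p \<noteq> (\<lambda>_. 0)"
proof
  assume "qvec Qd p = (\<lambda>_. 0)"
  then have "qvec Qd (p + n) = (\<lambda>_. 0)" for n
    by (induction n) (simp_all add: qvec_Suc)
  from this[of "L - p"] assms show False by simp
qed

lemma numop_qvec: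
  assumes "\<forall>S T. op_mult numop Qd S T - op_mult Qd numop S T = c * Qd S T"
  shows "op_apply numop (qvec Qd p) = (\<lambda>S. (c * of_nat p) * qvec Qd p S)"
proof (induction p)
  case 0
  show ?case by (auto simp: qvec_def op_apply_numop vac_def)
next
  case (Suc p)
  have "op_mult numop Qd = (\<lambda>S T. c * Qd S T + op_mult Qd numop S T)"
    using assms by (auto simp: algebra_simps)
  then have "op_apply numop (qvec Qd (Suc p))
      = (\<lambda>S. c * op_apply Qd (qvec Qd p) S + op_apply Qd (op_apply numop (qvec Qd p)) S)"
    by (simp add: qvec_Suc flip: op_apply_op_mult add: op_apply_add_op op_apply_scale_op)
  also have "\<dots> = (\<lambda>S. (c * of_nat (Suc p)) * qvec Qd (Suc p) S)"
    unfolding Suc op_apply_scale_vec qvec_Suc by (simp add: algebra_simps)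
  finally show ?case .
qed

lemma proportional_qvec_if_tower_eigen:
  assumes "\<forall>p\<le>L. op_apply H (qvec Qd p) = (\<lambda>S. E p * qvec Qd p S)"
    and "\<forall>p>L. qvec Qd p = (\<lambda>_. 0)"
  shows "proportional H (qvec Qd p)"
  using assms unfolding proportional_def by (metis leI mult_zero_right op_apply_zero_vec)

definition local_sum ::
    "('v::finite \<Rightarrow> 'v \<Rightarrow> bool) \<Rightarrow> real \<Rightarrow> ('v set \<Rightarrow> 'v op) \<Rightarrow> 'v op" where
  "local_sum G r h = (\<lambda>S T. \<Sum>X\<in>{X. diam_le G X r}. h X S T)"

lemma P1_decomp_local_sum:
  assumes "P1_decomp G Qd \<alpha> R H \<Omega> \<omega> h"
  shows "local_sum G (\<alpha> R) h = (\<lambda>S T. H S T - \<Omega> * idop S T - \<omega> * numop S T)"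
  using assms unfolding P1_decomp_def local_sum_def by auto

lemma supported_in_zero [simp]: "supported_in X (\<lambda>_ _. 0)"
  unfolding supported_in_def by simp

lemma diam_le_imp_diam_le_ceiling:
  assumes "diam_le G X r"
  shows "diam G X \<le> enat (nat \<lceil>r\<rceil>)"
proof -
  obtain n where "diam G X = enat n" and "real n \<le> r"
    using assms unfolding diam_le_def by auto
  moreover from \<open>real n \<le> r\<close> have "int n \<le> \<lceil>r\<rceil>"
    using ceiling_mono by fastforce
  then have "n \<le> nat \<lceil>r\<rceil>" by linarith
  ultimately show ?thesis by simp
qed

text \<open>(P.2) is phrased with an integer diameter bound; a family indexed by a real bound r
  is extended by zero to the sets of diameter at most the ceiling of r.\<close>

lemma P2_local_sum_eigenvalue_zero:
  fixes G :: "'v::finite \<Rightarrow> 'v \<Rightarrow> bool"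
  assumes "prop_P2 G Qd L \<beta>" and "r > 0" and \<beta>: "\<beta> (nat \<lceil>r\<rceil>) > 0"
    and h: "\<forall>X. diam_le G X r \<longrightarrow> supported_in X (h X) \<and>
          op_apply (h X) (qvec Qd 1) = (\<lambda>_. 0) \<and> op_apply (h X) vac = (\<lambda>_. 0)"
    and eig: "op_apply (local_sum G r h) (qvec Qd p) = (\<lambda>S. E' * qvec Qd p S)"
    and "p \<le> L" and p: "real p * \<beta> (nat \<lceil>r\<rceil>) \<le> real (card (UNIV :: 'v set))"
  shows "E' = 0"
proof -
  define h' where "h' X = (if diam_le G X r then h X else (\<lambda>_ _. 0))" for X
  have pos: "nat \<lceil>r\<rceil> > 0" using \<open>r > 0\<close> by simp
  have h': "\<forall>X. diam G X \<le> enat (nat \<lceil>r\<rceil>) \<longrightarrow> supported_in X (h' X) \<and>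
      op_apply (h' X) (qvec Qd 1) = (\<lambda>_. 0) \<and> op_apply (h' X) vac = (\<lambda>_. 0)"
    using h by (simp add: h'_def)
  note P2 = assms(1)[unfolded prop_P2_def, rule_format, OF pos h'[rule_format]]
  have sum_eq: "local_sum G r h = (\<lambda>S T. \<Sum>X\<in>{X. diam G X \<le> enat (nat \<lceil>r\<rceil>)}. h' X S T)"
    unfolding local_sum_def
    by (intro ext sum.mono_neutral_cong_left) (auto simp: h'_def diam_le_imp_diam_le_ceiling)
  from eig have "op_apply (\<lambda>S T. \<Sum>X\<in>{X. diam G X \<le> enat (nat \<lceil>r\<rceil>)}. h' X S T) (qvec Qd p)
      = (\<lambda>S. E' * qvec Qd p S)"
    unfolding sum_eq .
  moreover have "real p \<le> min (real L) (real (card (UNIV :: 'v set)) / \<beta> (nat \<lceil>r\<rceil>))"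
    using \<open>p \<le> L\<close> p \<beta> by (simp add: pos_le_divide_eq)
  ultimately show ?thesis by (intro P2[where p = p] conjI)
qed

lemma local_sum_tower_eigen:
  assumes "P1_decomp G Qd \<alpha> R H \<Omega> \<omega> h"
    and "\<forall>S T. op_mult numop Qd S T - op_mult Qd numop S T = c * Qd S T"
    and "op_apply H (qvec Qd p) = (\<lambda>S. E * qvec Qd p S)"
  shows "op_apply (local_sum G (\<alpha> R) h) (qvec Qd p)
       = (\<lambda>S. (E - \<Omega> - c * \<omega> * of_nat p) * qvec Qd p S)"
proof -
  have "op_apply (local_sum G (\<alpha> R) h) (qvec Qd p) = (\<lambda>S. op_apply H (qvec Qd p) S
      - \<Omega> * op_apply idop (qvec Qd p) S - \<omega> * op_apply numop (qvec Qd p) S)"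
    unfolding P1_decomp_local_sum[OF assms(1)] op_apply_diff_op op_apply_scale_op ..
  also have "\<dots> = (\<lambda>S. (E - \<Omega> - c * \<omega> * of_nat p) * qvec Qd p S)"
    unfolding assms(3) op_apply_idop numop_qvec[OF assms(2)] by (simp add: algebra_simps)
  finally show ?thesis .
qed

lemma eigenvalue_zero_if_annihilates_qvec:
  assumes "op_apply A (qvec Qd p) = (\<lambda>S. e * qvec Qd p S)" and "op_apply A (qvec Qd p) = (\<lambda>_. 0)"
    and "qvec Qd L \<noteq> (\<lambda>_. 0)" and "p \<le> L"
  shows "e = 0"
  using assms qvec_nonzero[OF assms(3,4)] by (metis mult_eq_0_iff)

lemma k_local_local_sum:
  assumes "P1_decomp G Qd \<alpha> R H \<Omega> \<omega> h" and "k_local k H" and "k \<ge> 1"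
  shows "k_local k (local_sum G (\<alpha> R) h)"
  unfolding P1_decomp_local_sum[OF assms(1)] using assms(2,3)
  by (intro k_local_diff_scaled k_local_mono[OF k_local_idop] k_local_mono[OF k_local_numop]) auto

lemma P1_decomp_tower_spectrum:
  fixes G :: "'v::finite \<Rightarrow> 'v \<Rightarrow> bool"
  assumes dec: "P1_decomp G Qd \<alpha> R H \<Omega> \<omega> h"
    and comm: "\<forall>S T. op_mult numop Qd S T - op_mult Qd numop S T = c * Qd S T"
    and "qvec Qd L \<noteq> (\<lambda>_. 0)" and P2: "prop_P2 G Qd L \<beta>" and P3: "prop_P3 Qd L \<gamma>"
    and "\<alpha> R > 0" and \<beta>: "\<beta> (nat \<lceil>\<alpha> R\<rceil>) > 0" and "k \<ge> 1" and "k_local k H"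
    and H: "\<forall>p\<le>L. op_apply H (qvec Qd p) = (\<lambda>S. E p * qvec Qd p S)"
    and N: "\<beta> (nat \<lceil>\<alpha> R\<rceil>) * \<gamma> k < real (card (UNIV :: 'v set))"
    and "p \<le> L"
  shows "E p = \<Omega> + c * \<omega> * of_nat p"
proof -
  let ?Hs = "local_sum G (\<alpha> R) h"
  have local_terms: "\<forall>X. diam_le G X (\<alpha> R) \<longrightarrow> supported_in X (h X) \<and>
      op_apply (h X) (qvec Qd 1) = (\<lambda>_. 0) \<and> op_apply (h X) vac = (\<lambda>_. 0)"
    using dec unfolding P1_decomp_def by (rule conjunct1)
  have eig: "op_apply ?Hs (qvec Qd q) = (\<lambda>S. (E q - \<Omega> - c * \<omega> * of_nat q) * qvec Qd q S)"
    if "q \<le> L" for q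
    using local_sum_tower_eigen[OF dec comm] H that by blast
  have low: "\<forall>q. real q \<le> min (\<gamma> k) (real L) \<longrightarrow> op_apply ?Hs (qvec Qd q) = (\<lambda>_. 0)"
  proof (intro allI impI)
    fix q assume q: "real q \<le> min (\<gamma> k) (real L)"
    then have "q \<le> L" by simp
    have "real q * \<beta> (nat \<lceil>\<alpha> R\<rceil>) \<le> \<gamma> k * \<beta> (nat \<lceil>\<alpha> R\<rceil>)"
      using q \<beta> by (simp add: mult_right_mono)
    also have "\<dots> < real (card (UNIV :: 'v set))" using N by (simp add: mult.commute)
    finally have "E q - \<Omega> - c * \<omega> * of_nat q = 0"
      by (intro P2_local_sum_eigenvalue_zero[OF P2 \<open>\<alpha> R > 0\<close> \<beta> local_terms eig]
          \<open>q \<le> L\<close> less_imp_le)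
    then show "op_apply ?Hs (qvec Qd q) = (\<lambda>_. 0)" using eig[OF \<open>q \<le> L\<close>] by simp
  qed
  have "k_local k ?Hs" using k_local_local_sum dec assms by blast
  with low have "op_apply ?Hs (qvec Qd p) = (\<lambda>_. 0)"
    using P3[unfolded prop_P3_def, rule_format, OF \<open>k \<ge> 1\<close> conjI, OF _ _ \<open>p \<le> L\<close>] by blast
  then have "E p - \<Omega> - c * \<omega> * of_nat p = 0"
    by (rule eigenvalue_zero_if_annihilates_qvec[OF eig[OF \<open>p \<le> L\<close>] _ assms(3) \<open>p \<le> L\<close>])
  then show ?thesis by (simp add: algebra_simps)
qed

theorem theorem3:
  fixes G :: "'v::finite \<Rightarrow> 'v \<Rightarrow> bool"
    and Qd :: "'v op" and c :: complex and L :: nat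
    and \<alpha> \<beta> \<gamma> :: "nat \<Rightarrow> real"
    and H :: "'v op" and E :: "nat \<Rightarrow> complex" and k R :: nat
  assumes "symp G" and "irreflp G"
    and "\<forall>S T. op_mult numop Qd S T - op_mult Qd numop S T = c * Qd S T"
    and "qvec Qd L \<noteq> (\<lambda>_. 0)" and "\<forall>p>L. qvec Qd p = (\<lambda>_. 0)"
    and "\<forall>n>0. \<alpha> n > 0" and "\<forall>n>0. \<beta> n > 0" and "\<forall>n>0. \<gamma> n > 0"
    and "prop_P1 G Qd \<alpha>" and "prop_P2 G Qd L \<beta>" and "prop_P3 Qd L \<gamma>"
    and "k \<ge> 1" and "R \<ge> 1" and "k_local k H" and "range_le G R H"
    and "\<forall>p\<le>L. op_apply H (qvec Qd p) = (\<lambda>S. E p * qvec Qd p S)"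
    and "real (card (UNIV :: 'v set)) > \<beta> (nat \<lceil>\<alpha> R\<rceil>) * \<gamma> k"
  shows "(\<exists>\<Omega> \<omega> h. P1_decomp G Qd \<alpha> R H \<Omega> \<omega> h) \<and>
         (\<forall>\<Omega> \<omega> h. P1_decomp G Qd \<alpha> R H \<Omega> \<omega> h \<longrightarrow>
            (\<forall>p\<le>L. E p = \<Omega> + c * \<omega> * of_nat p))"
proof -
  have "\<alpha> R > 0" and "\<beta> (nat \<lceil>\<alpha> R\<rceil>) > 0" using assms(6,7,13) by auto
  have "\<exists>\<Omega> \<omega> h. P1_decomp G Qd \<alpha> R H \<Omega> \<omega> h"
    using assms(9,13,15) proportional_qvec_if_tower_eigen[OF assms(16,5)]
    unfolding prop_P1_def by auto
  moreover have "E p = \<Omega> + c * \<omega> * of_nat p"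
    if "P1_decomp G Qd \<alpha> R H \<Omega> \<omega> h" and "p \<le> L" for \<Omega> \<omega> h p
    using P1_decomp_tower_spectrum[OF that(1) assms(3,4,10,11) \<open>\<alpha> R > 0\<close>
        \<open>\<beta> (nat \<lceil>\<alpha> R\<rceil>) > 0\<close> assms(12,14,16,17) that(2)] .
  ultimately show ?thesis by blast
qed

end
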